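(* Let $A, C, D$ be binary random variables, with $A$ taking values $a,\overline{a}$, $C$ taking values $c,\overline{c}$, $D$ taking values $d,\overline{d}$, and let $Y$ be a real random variable with finite expectation. Suppose the joint distribution factorizes as \[ p(A,C,D,Y)=p(C)\,p(D\mid C)\,p(A\mid C)\,p(Y\mid A,C), \] and that every event $\{A=x, C=y, D=z\}$ has positive probability. Let $p(c)=0.5$, $p(d\mid c)=p(\overline{d}\mid\overline{c})\ge 0.5$ and $p(\overline{a}\mid\overline{c})\ge p(a\mid c)\ge 0.5$. If \[ E[Y|a,c]-E[Y|a,\overline{c}]\ \ge\ E[Y|\overline{a},\overline{c}]-E[Y|\overline{a},c]\ \ge\ 0, \] then $RD_{crude}\ge RD_{true}$ and $RD_{obs}\ge RD_{true}$.
   Context: $RD_{true}=E[Y|a,c]p(c)+E[Y|a,\overline{c}]p(\overline{c})-E[Y|\overline{a},c]p(c)-E[Y|\overline{a},\overline{c}]p(\overline{c})$; $RD_{crude}=E[Y|a]-E[Y|\overline{a}]$; $RD_{obs}=E[Y|a,d]p(d)+E[Y|a,\overline{d}]p(\overline{d})-E[Y|\overline{a},d]p(d)-E[Y|\overline{a},\overline{d}]p(\overline{d})$. *)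

theory Defs
  imports "HOL-Probability.Probability"
begin

text \<open>Binary variables are modelled as bool-valued random variables:
  A = True means a, C = True means c, D = True means d.\<close>

definition ev :: "'s measure \<Rightarrow> ('s \<Rightarrow> bool) \<Rightarrow> 's set" where
  "ev M P = {\<omega> \<in> space M. P \<omega>}"

definition pr :: "'s measure \<Rightarrow> ('s \<Rightarrow> bool) \<Rightarrow> real" where
  "pr M P = measure M (ev M P)"

definition condE :: "'s measure \<Rightarrow> ('s \<Rightarrow> real) \<Rightarrow> ('s \<Rightarrow> bool) \<Rightarrow> real" where
  "condE M Y P = (LINT \<omega>|M. indicator (ev M P) \<omega> * Y \<omega>) / pr M P"

definition RD_true :: "'s measure \<Rightarrow> ('s \<Rightarrow> bool) \<Rightarrow> ('s \<Rightarrow> bool) \<Rightarrow> ('s \<Rightarrow> real) \<Rightarrow> real" where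
  "RD_true M A C Y =
     condE M Y (\<lambda>\<omega>. A \<omega> \<and> C \<omega>) * pr M C
   + condE M Y (\<lambda>\<omega>. A \<omega> \<and> \<not> C \<omega>) * pr M (\<lambda>\<omega>. \<not> C \<omega>)
   - condE M Y (\<lambda>\<omega>. \<not> A \<omega> \<and> C \<omega>) * pr M C
   - condE M Y (\<lambda>\<omega>. \<not> A \<omega> \<and> \<not> C \<omega>) * pr M (\<lambda>\<omega>. \<not> C \<omega>)"

definition RD_crude :: "'s measure \<Rightarrow> ('s \<Rightarrow> bool) \<Rightarrow> ('s \<Rightarrow> real) \<Rightarrow> real" where
  "RD_crude M A Y = condE M Y A - condE M Y (\<lambda>\<omega>. \<not> A \<omega>)"

definition RD_obs :: "'s measure \<Rightarrow> ('s \<Rightarrow> bool) \<Rightarrow> ('s \<Rightarrow> bool) \<Rightarrow> ('s \<Rightarrow> real) \<Rightarrow> real" where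
  "RD_obs M A D Y = RD_true M A D Y"

end

(* Under the factorization Y is independent of D given A and C, so E[Y|A,D] is a mixture of the
   stratum means E[Y|A,C] with weights p(d|c) p(a|c) p(c), just as E[Y|A] is the mixture with
   weights p(a|c) p(c); for p(c) = 1/2, RD_true is the plain average of the two stratum contrasts.
   Writing a mixture of y and y' as y' + w (y - y'), both RD_crude - RD_true and RD_obs - RD_true
   take the form s (y_ac - y_anc) + t (y_nanc - y_nac) with s >= 0 and s + t >= 0, which is
   nonnegative because the first contrast dominates the second. By the monotonicity of
   u / (u + v), s >= 0 amounts to p(a|c) >= 1 - p(not a|not c), and s + t >= 0 to
   b (1 - b) <= a (1 - a) for a = p(a|c) <= b = p(not a|not c), which holds as p (1 - p)
   decreases on [1/2, 1]. *)

theory Submission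
  imports Defs
begin

definition wavg :: "real \<Rightarrow> real \<Rightarrow> real \<Rightarrow> real \<Rightarrow> real" where
  "wavg u v x y = (u * x + v * y) / (u + v)"

lemma wavg_eq: "0 < u + v \<Longrightarrow> wavg u v x y = y + u / (u + v) * (x - y)"
  by (simp add: wavg_def field_simps)

lemma wavg_divide: "k \<noteq> 0 \<Longrightarrow> wavg (u / k) (v / k) x y = wavg u v x y"
  unfolding wavg_def by (simp add: add_divide_distrib[symmetric])

lemma frac_le_frac_iff:
  fixes u v u' v' :: real
  assumes "0 < u" "0 < v" "0 < u'" "0 < v'"
  shows "u / (u + v) \<le> u' / (u' + v') \<longleftrightarrow> u * v' \<le> u' * v"
  using assms by (simp add: field_simps)

lemma one_minus_frac: "0 < u \<Longrightarrow> 0 < v \<Longrightarrow> 1 - u / (u + v) = v / (v + (u::real))"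
  by (simp add: field_simps)

lemma bernoulli_variance_antimono:
  fixes a b :: real
  assumes "1/2 \<le> a" "a \<le> b"
  shows "b * (1 - b) \<le> a * (1 - a)"
proof -
  have "0 \<le> (b - a) * (a + b - 1)" using assms by simp
  then show ?thesis by (simp add: algebra_simps)
qed

lemma weighted_sum_nonneg:
  fixes s t X Z :: real
  assumes "0 \<le> Z" "Z \<le> X" "0 \<le> s" "0 \<le> s + t"
  shows "0 \<le> s * X + t * Z"
proof -
  have "(s + t) * Z \<le> s * X + t * Z"
    using assms by (simp add: distrib_right mult_left_mono)
  moreover have "0 \<le> (s + t) * Z" using assms by simp
  ultimately show ?thesis by linarith
qed

lemma mixture_contrast_ge_average:
  fixes a b y1 y2 y3 y4 :: real
  assumes "1/2 \<le> a" "a \<le> b" "b < 1" "0 \<le> y4 - y3" "y4 - y3 \<le> y1 - y2"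
  shows "(y1 + y2 - y3 - y4) / 2 \<le> wavg a (1 - b) y1 y2 - wavg (1 - a) b y3 y4"
proof -
  define w where "w = a / (a + (1 - b))"
  define z where "z = (1 - a) / ((1 - a) + b)"
  have "1/2 \<le> w"
    using frac_le_frac_iff[of 1 1 a "1 - b"] assms by (simp add: w_def)
  moreover have "1 - w \<le> z"
    using frac_le_frac_iff[of "1 - b" a "1 - a" b] one_minus_frac[of a "1 - b"]
      bernoulli_variance_antimono[of a b] assms
    by (simp add: w_def z_def algebra_simps)
  ultimately have "0 \<le> (w - 1/2) * (y1 - y2) + (z - 1/2) * (y4 - y3)"
    using weighted_sum_nonneg assms by simp
  moreover have "wavg a (1 - b) y1 y2 = y2 + w * (y1 - y2)"
    "wavg (1 - a) b y3 y4 = y4 + z * (y3 - y4)"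
    using assms by (simp_all add: wavg_eq w_def z_def)
  ultimately show ?thesis by (simp add: algebra_simps add_divide_distrib diff_divide_distrib)
qed

lemma proxy_mixture_contrast_ge_average:
  fixes a b q y1 y2 y3 y4 :: real
  assumes "1/2 \<le> a" "a \<le> b" "b < 1" "1/2 \<le> q" "q < 1"
    and "0 \<le> y4 - y3" "y4 - y3 \<le> y1 - y2"
  shows "(y1 + y2 - y3 - y4) / 2 \<le>
    (wavg (q * a) ((1 - q) * (1 - b)) y1 y2 + wavg ((1 - q) * a) (q * (1 - b)) y1 y2
     - wavg (q * (1 - a)) ((1 - q) * b) y3 y4 - wavg ((1 - q) * (1 - a)) (q * b) y3 y4) / 2"
proof -
  define w where "w = q * a / (q * a + (1 - q) * (1 - b))"
  define w' where "w' = (1 - q) * a / ((1 - q) * a + q * (1 - b))"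
  define z where "z = q * (1 - a) / (q * (1 - a) + (1 - q) * b)"
  define z' where "z' = (1 - q) * (1 - a) / ((1 - q) * (1 - a) + q * b)"
  have pos: "0 < q" "0 < 1 - q" "0 < a" "0 < 1 - a" "0 < b" "0 < 1 - b"
    using assms by auto
  have "q * (1 - q) * ((1 - b) * (1 - b)) \<le> q * (1 - q) * (a * a)"
    using assms pos by (intro mult_left_mono mult_mono) auto
  then have "(1 - q) * (1 - b) / ((1 - q) * (1 - b) + q * a) \<le> w'"
    unfolding w'_def using pos by (subst frac_le_frac_iff) (simp_all only: ac_simps, auto)
  then have "1 - w \<le> w'"
    using one_minus_frac[of "q * a" "(1 - q) * (1 - b)"] pos by (simp add: w_def)
  moreover have "q * (1 - q) * (b * (1 - b)) \<le> q * (1 - q) * (a * (1 - a))"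
    using assms pos bernoulli_variance_antimono[of a b] by (intro mult_left_mono) auto
  then have "q * b / (q * b + (1 - q) * (1 - a)) \<le> w"
    and "(1 - q) * b / ((1 - q) * b + q * (1 - a)) \<le> w'"
    unfolding w_def w'_def using pos by (subst frac_le_frac_iff; (simp_all only: ac_simps)?; auto)+
  then have "1 - z' \<le> w" "1 - z \<le> w'"
    using one_minus_frac[of "(1 - q) * (1 - a)" "q * b"]
      one_minus_frac[of "q * (1 - a)" "(1 - q) * b"] pos
    by (simp_all add: z_def z'_def)
  ultimately have "0 \<le> (w + w' - 1) * (y1 - y2) + (z + z' - 1) * (y4 - y3)"
    using weighted_sum_nonneg assms by simp
  moreover have "wavg (q * a) ((1 - q) * (1 - b)) y1 y2 = y2 + w * (y1 - y2)"
    "wavg ((1 - q) * a) (q * (1 - b)) y1 y2 = y2 + w' * (y1 - y2)"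
    "wavg (q * (1 - a)) ((1 - q) * b) y3 y4 = y4 + z * (y3 - y4)"
    "wavg ((1 - q) * (1 - a)) (q * b) y3 y4 = y4 + z' * (y3 - y4)"
    using pos by (simp_all add: wavg_eq w_def w'_def z_def z'_def add_pos_pos)
  ultimately show ?thesis by (simp add: algebra_simps add_divide_distrib diff_divide_distrib)
qed

context finite_measure
begin

lemma sets_ev [measurable]: "P \<in> measurable M (count_space UNIV) \<Longrightarrow> ev M P \<in> sets M"
  unfolding ev_def by measurable

lemma pr_mono:
  "(\<And>\<omega>. \<omega> \<in> space M \<Longrightarrow> P \<omega> \<Longrightarrow> Q \<omega>) \<Longrightarrow> Q \<in> measurable M (count_space UNIV)
    \<Longrightarrow> pr M P \<le> pr M Q"
  unfolding pr_def ev_def by (intro finite_measure_mono) (auto, measurable)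

lemma pr_split:
  assumes [measurable]: "P \<in> measurable M (count_space UNIV)" "Q \<in> measurable M (count_space UNIV)"
  shows "pr M P = pr M (\<lambda>\<omega>. P \<omega> \<and> Q \<omega>) + pr M (\<lambda>\<omega>. P \<omega> \<and> \<not> Q \<omega>)"
proof -
  have "ev M P = ev M (\<lambda>\<omega>. P \<omega> \<and> Q \<omega>) \<union> ev M (\<lambda>\<omega>. P \<omega> \<and> \<not> Q \<omega>)"
    by (auto simp: ev_def)
  moreover have "ev M (\<lambda>\<omega>. P \<omega> \<and> Q \<omega>) \<inter> ev M (\<lambda>\<omega>. P \<omega> \<and> \<not> Q \<omega>) = {}"
    by (auto simp: ev_def)
  ultimately show ?thesis
    unfolding pr_def by (simp add: finite_measure_Union)
qed

lemma condE_split: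
  assumes [measurable]: "P \<in> measurable M (count_space UNIV)" "Q \<in> measurable M (count_space UNIV)"
    and Y: "integrable M Y"
    and "0 < pr M (\<lambda>\<omega>. P \<omega> \<and> Q \<omega>)" "0 < pr M (\<lambda>\<omega>. P \<omega> \<and> \<not> Q \<omega>)"
  shows "condE M Y P = wavg (pr M (\<lambda>\<omega>. P \<omega> \<and> Q \<omega>)) (pr M (\<lambda>\<omega>. P \<omega> \<and> \<not> Q \<omega>))
    (condE M Y (\<lambda>\<omega>. P \<omega> \<and> Q \<omega>)) (condE M Y (\<lambda>\<omega>. P \<omega> \<and> \<not> Q \<omega>))"
proof -
  let ?J = "\<lambda>R. LINT \<omega>|M. indicator (ev M R) \<omega> * Y \<omega>"
  have int: "integrable M (\<lambda>\<omega>. indicator (ev M R) \<omega> * Y \<omega>)"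
    if "R \<in> measurable M (count_space UNIV)" for R
    using integrable_mult_indicator[OF _ Y, of "ev M R"] that by simp
  have "indicator (ev M P) \<omega> * Y \<omega> = indicator (ev M (\<lambda>\<omega>. P \<omega> \<and> Q \<omega>)) \<omega> * Y \<omega>
      + indicator (ev M (\<lambda>\<omega>. P \<omega> \<and> \<not> Q \<omega>)) \<omega> * Y \<omega>" for \<omega>
    by (auto simp: ev_def split: split_indicator)
  then have "?J P = ?J (\<lambda>\<omega>. P \<omega> \<and> Q \<omega>) + ?J (\<lambda>\<omega>. P \<omega> \<and> \<not> Q \<omega>)"
    by (simp add: int)
  then show ?thesis
    using assms(4,5) pr_split[OF assms(1,2)] by (simp add: condE_def wavg_def)
qed

lemma integral_indicator_eq_of_proportional_laws:
  assumes [measurable]: "E1 \<in> sets M" "E2 \<in> sets M" "Y \<in> borel_measurable M"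
    and "0 \<le> c1" "0 \<le> c2"
    and laws: "\<And>B. B \<in> sets borel \<Longrightarrow>
      c1 * measure M {\<omega> \<in> E1. Y \<omega> \<in> B} = c2 * measure M {\<omega> \<in> E2. Y \<omega> \<in> B}"
  shows "c1 * (LINT \<omega>|M. indicator E1 \<omega> * Y \<omega>) = c2 * (LINT \<omega>|M. indicator E2 \<omega> * Y \<omega>)"
proof -
  let ?law = "\<lambda>c E. distr (density M (\<lambda>\<omega>. ennreal (c * indicator E \<omega>))) borel Y"
  have emeasure_law: "emeasure (?law c E) B = ennreal (c * measure M {\<omega> \<in> E. Y \<omega> \<in> B})"
    if [measurable]: "B \<in> sets borel" "E \<in> sets M" and "0 \<le> c" for B E c
  proof -
    have E: "{\<omega> \<in> E. Y \<omega> \<in> B} = E \<inter> (Y -` B \<inter> space M)"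
      using sets.sets_into_space[OF \<open>E \<in> sets M\<close>] by auto
    have "emeasure (?law c E) B
        = (\<integral>\<^sup>+ \<omega>. ennreal (c * indicator E \<omega>) * indicator (Y -` B \<inter> space M) \<omega> \<partial>M)"
      by (simp add: emeasure_distr emeasure_density)
    also have "\<dots> = (\<integral>\<^sup>+ \<omega>. ennreal c * indicator {\<omega> \<in> E. Y \<omega> \<in> B} \<omega> \<partial>M)"
      by (intro nn_integral_cong) (auto simp: E ennreal_mult split: split_indicator)
    also have "\<dots> = ennreal c * emeasure M {\<omega> \<in> E. Y \<omega> \<in> B}"
      by (simp add: E nn_integral_cmult_indicator)
    also have "\<dots> = ennreal (c * measure M {\<omega> \<in> E. Y \<omega> \<in> B})"
      using \<open>0 \<le> c\<close> by (simp add: emeasure_eq_measure ennreal_mult)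
    finally show ?thesis .
  qed
  have integral_law: "integral\<^sup>L (?law c E) (\<lambda>y. y) = c * (LINT \<omega>|M. indicator E \<omega> * Y \<omega>)"
    if [measurable]: "E \<in> sets M" and "0 \<le> c" for E c
    using \<open>0 \<le> c\<close> by (simp add: integral_distr integral_density mult.assoc)
  have "?law c1 E1 = ?law c2 E2"
    by (rule measure_eqI) (simp_all add: emeasure_law assms)
  then show ?thesis
    using integral_law[of E1 c1] integral_law[of E2 c2] assms by simp
qed

lemma condE_eq_of_proportional_laws:
  assumes [measurable]: "P \<in> measurable M (count_space UNIV)" "Q \<in> measurable M (count_space UNIV)"
    "Y \<in> borel_measurable M"
    and "0 < c" "0 \<le> d" "0 < pr M P"
    and laws: "\<And>B. B \<in> sets borel \<Longrightarrow>
      pr M (\<lambda>\<omega>. P \<omega> \<and> Y \<omega> \<in> B) * c = d * pr M (\<lambda>\<omega>. Q \<omega> \<and> Y \<omega> \<in> B)"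
  shows "condE M Y P = condE M Y Q"
proof -
  let ?J = "\<lambda>R. LINT \<omega>|M. indicator (ev M R) \<omega> * Y \<omega>"
  have pr_eq: "c * pr M P = d * pr M Q"
    using laws[of UNIV] by (simp add: mult.commute)
  have J_eq: "c * ?J P = d * ?J Q"
  proof (rule integral_indicator_eq_of_proportional_laws)
    fix B :: "real set" assume "B \<in> sets borel"
    moreover have "{\<omega> \<in> ev M R. Y \<omega> \<in> B} = ev M (\<lambda>\<omega>. R \<omega> \<and> Y \<omega> \<in> B)" for R
      by (auto simp: ev_def)
    ultimately show "c * measure M {\<omega> \<in> ev M P. Y \<omega> \<in> B} = d * measure M {\<omega> \<in> ev M Q. Y \<omega> \<in> B}"
      using laws by (simp add: pr_def mult.commute)
  qed (use assms in auto)
  have "0 < d * pr M Q"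
    using pr_eq assms(4,6) by (metis mult_pos_pos)
  then have "d \<noteq> 0"
    by auto
  have "condE M Y P = (c * ?J P) / (c * pr M P)"
    using \<open>0 < c\<close> by (simp add: condE_def)
  also have "\<dots> = (d * ?J Q) / (d * pr M Q)"
    by (simp only: J_eq pr_eq)
  also have "\<dots> = condE M Y Q"
    using \<open>d \<noteq> 0\<close> by (simp add: condE_def)
  finally show ?thesis .
qed

lemma RD_crude_eq_mixture:
  assumes [measurable]: "A \<in> measurable M (count_space UNIV)" "C \<in> measurable M (count_space UNIV)"
    and "integrable M Y" and pos: "\<And>x y. 0 < pr M (\<lambda>\<omega>. A \<omega> = x \<and> C \<omega> = y)"
  shows "RD_crude M A Y =
    wavg (pr M (\<lambda>\<omega>. A \<omega> \<and> C \<omega>)) (pr M (\<lambda>\<omega>. A \<omega> \<and> \<not> C \<omega>))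
      (condE M Y (\<lambda>\<omega>. A \<omega> \<and> C \<omega>)) (condE M Y (\<lambda>\<omega>. A \<omega> \<and> \<not> C \<omega>))
  - wavg (pr M (\<lambda>\<omega>. \<not> A \<omega> \<and> C \<omega>)) (pr M (\<lambda>\<omega>. \<not> A \<omega> \<and> \<not> C \<omega>))
      (condE M Y (\<lambda>\<omega>. \<not> A \<omega> \<and> C \<omega>)) (condE M Y (\<lambda>\<omega>. \<not> A \<omega> \<and> \<not> C \<omega>))"
  using condE_split[of A C Y] condE_split[of "\<lambda>\<omega>. \<not> A \<omega>" C Y] pos[of True True] pos[of True False]
    pos[of False True] pos[of False False] \<open>integrable M Y\<close>
  by (simp add: RD_crude_def)

end

lemma (in prob_space) pr_not:
  "P \<in> measurable M (count_space UNIV) \<Longrightarrow> pr M (\<lambda>\<omega>. \<not> P \<omega>) = 1 - pr M P"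
  using pr_split[of "\<lambda>_. True" P] by (simp add: pr_def ev_def prob_space)

locale proxy_confounder = prob_space M for M :: "'s measure" +
  fixes A C D :: "'s \<Rightarrow> bool" and Y :: "'s \<Rightarrow> real"
  assumes A_measurable [measurable]: "A \<in> measurable M (count_space UNIV)"
    and C_measurable [measurable]: "C \<in> measurable M (count_space UNIV)"
    and D_measurable [measurable]: "D \<in> measurable M (count_space UNIV)"
    and Y_measurable [measurable]: "Y \<in> borel_measurable M"
    and Y_integrable: "integrable M Y"
    and factorization: "\<And>x y z B. B \<in> sets borel \<Longrightarrow>
        pr M (\<lambda>\<omega>. A \<omega> = x \<and> C \<omega> = y \<and> D \<omega> = z \<and> Y \<omega> \<in> B) * pr M (\<lambda>\<omega>. C \<omega> = y)
      = pr M (\<lambda>\<omega>. C \<omega> = y \<and> D \<omega> = z) * pr M (\<lambda>\<omega>. A \<omega> = x \<and> C \<omega> = y \<and> Y \<omega> \<in> B)"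
    and atoms_pos: "\<And>x y z. 0 < pr M (\<lambda>\<omega>. A \<omega> = x \<and> C \<omega> = y \<and> D \<omega> = z)"
    and pr_C: "pr M C = 1/2"
    and symmetric_proxy: "pr M (\<lambda>\<omega>. C \<omega> \<and> D \<omega>) / pr M C
      = pr M (\<lambda>\<omega>. \<not> C \<omega> \<and> \<not> D \<omega>) / pr M (\<lambda>\<omega>. \<not> C \<omega>)"
begin

definition p_a_c :: real where "p_a_c = pr M (\<lambda>\<omega>. A \<omega> \<and> C \<omega>) / pr M C"
definition p_na_nc :: real where "p_na_nc = pr M (\<lambda>\<omega>. \<not> A \<omega> \<and> \<not> C \<omega>) / pr M (\<lambda>\<omega>. \<not> C \<omega>)"
definition p_d_c :: real where "p_d_c = pr M (\<lambda>\<omega>. C \<omega> \<and> D \<omega>) / pr M C"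

definition EY_a_c :: real where "EY_a_c = condE M Y (\<lambda>\<omega>. A \<omega> \<and> C \<omega>)"
definition EY_a_nc :: real where "EY_a_nc = condE M Y (\<lambda>\<omega>. A \<omega> \<and> \<not> C \<omega>)"
definition EY_na_c :: real where "EY_na_c = condE M Y (\<lambda>\<omega>. \<not> A \<omega> \<and> C \<omega>)"
definition EY_na_nc :: real where "EY_na_nc = condE M Y (\<lambda>\<omega>. \<not> A \<omega> \<and> \<not> C \<omega>)"

lemma pr_not_C: "pr M (\<lambda>\<omega>. \<not> C \<omega>) = 1/2"
  using pr_not[of C] pr_C by simp

lemma margins_pos: "0 < pr M (\<lambda>\<omega>. A \<omega> = x \<and> C \<omega> = y)" "0 < pr M (\<lambda>\<omega>. C \<omega> = y \<and> D \<omega> = z)"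
  using atoms_pos[of x y z]
    pr_mono[of "\<lambda>\<omega>. A \<omega> = x \<and> C \<omega> = y \<and> D \<omega> = z" "\<lambda>\<omega>. A \<omega> = x \<and> C \<omega> = y"]
    pr_mono[of "\<lambda>\<omega>. A \<omega> = x \<and> C \<omega> = y \<and> D \<omega> = z" "\<lambda>\<omega>. C \<omega> = y \<and> D \<omega> = z"]
  by force+

lemma pr_A_C:
  "pr M (\<lambda>\<omega>. A \<omega> \<and> C \<omega>) = p_a_c / 2" "pr M (\<lambda>\<omega>. \<not> A \<omega> \<and> C \<omega>) = (1 - p_a_c) / 2"
  "pr M (\<lambda>\<omega>. A \<omega> \<and> \<not> C \<omega>) = (1 - p_na_nc) / 2" "pr M (\<lambda>\<omega>. \<not> A \<omega> \<and> \<not> C \<omega>) = p_na_nc / 2"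
  using pr_split[of C A] pr_split[of "\<lambda>\<omega>. \<not> C \<omega>" A]
  unfolding p_a_c_def p_na_nc_def pr_C pr_not_C by (simp_all add: conj_commute)

lemma pr_C_D:
  "pr M (\<lambda>\<omega>. C \<omega> \<and> D \<omega>) = p_d_c / 2" "pr M (\<lambda>\<omega>. C \<omega> \<and> \<not> D \<omega>) = (1 - p_d_c) / 2"
  "pr M (\<lambda>\<omega>. \<not> C \<omega> \<and> D \<omega>) = (1 - p_d_c) / 2" "pr M (\<lambda>\<omega>. \<not> C \<omega> \<and> \<not> D \<omega>) = p_d_c / 2"
  using pr_split[of C D] pr_split[of "\<lambda>\<omega>. \<not> C \<omega>" D] symmetric_proxy
  unfolding p_d_c_def pr_C pr_not_C by simp_all

lemma p_na_nc_less_1: "p_na_nc < 1"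
  using pr_A_C(3) margins_pos(1)[of True False] by simp

lemma p_d_c_less_1: "p_d_c < 1"
  using pr_C_D(2) margins_pos(2)[of True False] by simp

lemma condE_A_D_eq_adjustment:
  "condE M Y (\<lambda>\<omega>. A \<omega> = x \<and> D \<omega> = z) =
    wavg (pr M (\<lambda>\<omega>. C \<omega> \<and> D \<omega> = z) / pr M C * (pr M (\<lambda>\<omega>. A \<omega> = x \<and> C \<omega>) / pr M C) * pr M C)
      (pr M (\<lambda>\<omega>. \<not> C \<omega> \<and> D \<omega> = z) / pr M (\<lambda>\<omega>. \<not> C \<omega>)
        * (pr M (\<lambda>\<omega>. A \<omega> = x \<and> \<not> C \<omega>) / pr M (\<lambda>\<omega>. \<not> C \<omega>)) * pr M (\<lambda>\<omega>. \<not> C \<omega>))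
      (condE M Y (\<lambda>\<omega>. A \<omega> = x \<and> C \<omega>)) (condE M Y (\<lambda>\<omega>. A \<omega> = x \<and> \<not> C \<omega>))"
proof -
  have pr_C_pos: "0 < pr M (\<lambda>\<omega>. C \<omega> = y)" for y
    using margins_pos(2)[of y z] pr_mono[of "\<lambda>\<omega>. C \<omega> = y \<and> D \<omega> = z" "\<lambda>\<omega>. C \<omega> = y"] by simp
  txt \<open>The factorization at B = UNIV gives p(x,y,z) = p(z|y) p(x|y) p(y); for general B it
    makes Y independent of D given A and C.\<close>
  have pr_stratum: "pr M (\<lambda>\<omega>. A \<omega> = x \<and> C \<omega> = y \<and> D \<omega> = z)
      = pr M (\<lambda>\<omega>. C \<omega> = y \<and> D \<omega> = z) / pr M (\<lambda>\<omega>. C \<omega> = y)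
        * (pr M (\<lambda>\<omega>. A \<omega> = x \<and> C \<omega> = y) / pr M (\<lambda>\<omega>. C \<omega> = y)) * pr M (\<lambda>\<omega>. C \<omega> = y)" for y
    using factorization[of UNIV x y z] pr_C_pos[of y] by (simp add: field_simps)
  have condE_stratum:
    "condE M Y (\<lambda>\<omega>. A \<omega> = x \<and> C \<omega> = y \<and> D \<omega> = z) = condE M Y (\<lambda>\<omega>. A \<omega> = x \<and> C \<omega> = y)" for y
  proof (rule condE_eq_of_proportional_laws)
    show "pr M (\<lambda>\<omega>. (A \<omega> = x \<and> C \<omega> = y \<and> D \<omega> = z) \<and> Y \<omega> \<in> B) * pr M (\<lambda>\<omega>. C \<omega> = y)
      = pr M (\<lambda>\<omega>. C \<omega> = y \<and> D \<omega> = z) * pr M (\<lambda>\<omega>. (A \<omega> = x \<and> C \<omega> = y) \<and> Y \<omega> \<in> B)"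
      if "B \<in> sets borel" for B
      using factorization[OF that, of x y z] by simp
  qed (use atoms_pos pr_C_pos in \<open>auto simp: pr_def\<close>)
  have strata: "(\<lambda>\<omega>. (A \<omega> = x \<and> D \<omega> = z) \<and> C \<omega>) = (\<lambda>\<omega>. A \<omega> = x \<and> C \<omega> = True \<and> D \<omega> = z)"
    "(\<lambda>\<omega>. (A \<omega> = x \<and> D \<omega> = z) \<and> \<not> C \<omega>) = (\<lambda>\<omega>. A \<omega> = x \<and> C \<omega> = False \<and> D \<omega> = z)"
    by auto
  show ?thesis
    using condE_split[of "\<lambda>\<omega>. A \<omega> = x \<and> D \<omega> = z" C Y, unfolded strata]
      atoms_pos[of x True z] atoms_pos[of x False z] Y_integrable
    unfolding pr_stratum condE_stratum by simp
qed

lemma RD_true_eq: "RD_true M A C Y = (EY_a_c + EY_a_nc - EY_na_c - EY_na_nc) / 2"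
  unfolding RD_true_def pr_C pr_not_C EY_a_c_def EY_a_nc_def EY_na_c_def EY_na_nc_def by simp

lemma RD_crude_eq:
  "RD_crude M A Y =
    wavg p_a_c (1 - p_na_nc) EY_a_c EY_a_nc - wavg (1 - p_a_c) p_na_nc EY_na_c EY_na_nc"
  using RD_crude_eq_mixture[OF A_measurable C_measurable Y_integrable margins_pos(1)]
  unfolding pr_A_C EY_a_c_def EY_a_nc_def EY_na_c_def EY_na_nc_def by (simp add: wavg_divide)

lemma RD_obs_eq:
  "RD_obs M A D Y =
    (wavg (p_d_c * p_a_c) ((1 - p_d_c) * (1 - p_na_nc)) EY_a_c EY_a_nc
     + wavg ((1 - p_d_c) * p_a_c) (p_d_c * (1 - p_na_nc)) EY_a_c EY_a_nc
     - wavg (p_d_c * (1 - p_a_c)) ((1 - p_d_c) * p_na_nc) EY_na_c EY_na_nc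
     - wavg ((1 - p_d_c) * (1 - p_a_c)) (p_d_c * p_na_nc) EY_na_c EY_na_nc) / 2"
proof -
  have cond_probs:
    "pr M (\<lambda>\<omega>. A \<omega> \<and> C \<omega>) / pr M C = p_a_c" "pr M (\<lambda>\<omega>. \<not> A \<omega> \<and> C \<omega>) / pr M C = 1 - p_a_c"
    "pr M (\<lambda>\<omega>. A \<omega> \<and> \<not> C \<omega>) / pr M (\<lambda>\<omega>. \<not> C \<omega>) = 1 - p_na_nc"
    "pr M (\<lambda>\<omega>. \<not> A \<omega> \<and> \<not> C \<omega>) / pr M (\<lambda>\<omega>. \<not> C \<omega>) = p_na_nc"
    "pr M (\<lambda>\<omega>. C \<omega> \<and> D \<omega>) / pr M C = p_d_c" "pr M (\<lambda>\<omega>. C \<omega> \<and> \<not> D \<omega>) / pr M C = 1 - p_d_c"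
    "pr M (\<lambda>\<omega>. \<not> C \<omega> \<and> D \<omega>) / pr M (\<lambda>\<omega>. \<not> C \<omega>) = 1 - p_d_c"
    "pr M (\<lambda>\<omega>. \<not> C \<omega> \<and> \<not> D \<omega>) / pr M (\<lambda>\<omega>. \<not> C \<omega>) = p_d_c"
    by (simp_all add: pr_A_C pr_C_D pr_C pr_not_C)
  have pr_D: "pr M D = 1/2" "pr M (\<lambda>\<omega>. \<not> D \<omega>) = 1/2"
    using pr_split[of D C] pr_C_D pr_not[of D] by (simp_all add: conj_commute)
  show ?thesis
    using condE_A_D_eq_adjustment[of True True] condE_A_D_eq_adjustment[of True False]
      condE_A_D_eq_adjustment[of False True] condE_A_D_eq_adjustment[of False False]
    unfolding RD_obs_def RD_true_def eq_True eq_False cond_probs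
    unfolding pr_D pr_C pr_not_C EY_a_c_def EY_a_nc_def EY_na_c_def EY_na_nc_def
    by (simp add: wavg_divide)
qed

end

theorem theorem4:
  fixes M :: "'s measure" and A C D :: "'s \<Rightarrow> bool" and Y :: "'s \<Rightarrow> real"
  assumes "prob_space M"
    and "A \<in> measurable M (count_space UNIV)"
    and "C \<in> measurable M (count_space UNIV)"
    and "D \<in> measurable M (count_space UNIV)"
    and "Y \<in> borel_measurable M" and "integrable M Y"
    and factor: "\<And>x y z B. B \<in> sets borel \<Longrightarrow>
        pr M (\<lambda>\<omega>. A \<omega> = x \<and> C \<omega> = y \<and> D \<omega> = z \<and> Y \<omega> \<in> B) * pr M (\<lambda>\<omega>. C \<omega> = y)
      = pr M (\<lambda>\<omega>. C \<omega> = y \<and> D \<omega> = z) * pr M (\<lambda>\<omega>. A \<omega> = x \<and> C \<omega> = y \<and> Y \<omega> \<in> B)"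
    and pos: "\<And>x y z. pr M (\<lambda>\<omega>. A \<omega> = x \<and> C \<omega> = y \<and> D \<omega> = z) > 0"
    and pc: "pr M C = 1/2"
    and pd: "pr M (\<lambda>\<omega>. C \<omega> \<and> D \<omega>) / pr M C
             = pr M (\<lambda>\<omega>. \<not> C \<omega> \<and> \<not> D \<omega>) / pr M (\<lambda>\<omega>. \<not> C \<omega>)"
    and pd2: "pr M (\<lambda>\<omega>. C \<omega> \<and> D \<omega>) / pr M C \<ge> 1/2"
    and pa: "pr M (\<lambda>\<omega>. \<not> A \<omega> \<and> \<not> C \<omega>) / pr M (\<lambda>\<omega>. \<not> C \<omega>)
             \<ge> pr M (\<lambda>\<omega>. A \<omega> \<and> C \<omega>) / pr M C"
    and pa2: "pr M (\<lambda>\<omega>. A \<omega> \<and> C \<omega>) / pr M C \<ge> 1/2"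
    and ey: "condE M Y (\<lambda>\<omega>. A \<omega> \<and> C \<omega>) - condE M Y (\<lambda>\<omega>. A \<omega> \<and> \<not> C \<omega>)
             \<ge> condE M Y (\<lambda>\<omega>. \<not> A \<omega> \<and> \<not> C \<omega>) - condE M Y (\<lambda>\<omega>. \<not> A \<omega> \<and> C \<omega>)"
    and ey2: "condE M Y (\<lambda>\<omega>. \<not> A \<omega> \<and> \<not> C \<omega>) - condE M Y (\<lambda>\<omega>. \<not> A \<omega> \<and> C \<omega>) \<ge> 0"
  shows "RD_crude M A Y \<ge> RD_true M A C Y \<and> RD_obs M A D Y \<ge> RD_true M A C Y"
proof -
  interpret proxy_confounder M A C D Y
    using assms by (intro proxy_confounder.intro proxy_confounder_axioms.intro) auto
  have "1/2 \<le> p_a_c" "p_a_c \<le> p_na_nc" "1/2 \<le> p_d_c"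
    using pa pa2 pd2 by (simp_all add: p_a_c_def p_na_nc_def p_d_c_def)
  note bounds = this(1,2) p_na_nc_less_1 this(3) p_d_c_less_1
  note effects = ey2[folded EY_na_c_def EY_na_nc_def]
    ey[folded EY_a_c_def EY_a_nc_def EY_na_c_def EY_na_nc_def]
  show ?thesis
    unfolding RD_true_eq RD_crude_eq RD_obs_eq
    using mixture_contrast_ge_average[OF bounds(1-3) effects]
      proxy_mixture_contrast_ge_average[OF bounds effects]
    by linarith
qed

end
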